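(* Let $(M,\Delta,S,\varepsilon)$ be a weak Kac algebra with target Cartan subalgebra $N_t$. For $x\in N_t$ let $L_x:N_t\to N_t$ be the linear operator $L_x(n)=xn$. Then $\varepsilon(x)=\mathrm{Tr}\,L_x$ for all $x\in N_t$, where $\mathrm{Tr}$ is the usual trace of a linear operator on the finite-dimensional space $N_t$.
   Context: All algebras are finite-dimensional over $\mathbb{C}$; $\varsigma$ denotes the flip and $\mu(x\otimes y)=xy$. A weak Kac algebra is a quadruple $(M,\Delta,S,\varepsilon)$ where $M$ is a finite-dimensional $C^*$-algebra; $\Delta:M\to M\otimes M$ is an injective, not necessarily unital, $*$-homomorphism with $(\Delta\otimes\mathrm{id})\Delta=(\mathrm{id}\otimes\Delta)\Delta$; $S:M\to M$ is a linear, unital, antimultiplicative, $*$-preserving bijection with $S^2=\mathrm{id}$ and $(S\otimes S)\circ\Delta=\varsigma\circ\Delta\circ S$; and $\varepsilon:M\to\mathbb{C}$ is linear with $(\varepsilon\otimes\mathrm{id})\Delta=(\mathrm{id}\otimes\varepsilon)\Delta=\mathrm{id}$, $\varepsilon\circ S=\varepsilon$, $\varepsilon(x^* )=\overline{\varepsilon(x)}$, $(\varepsilon\otimes\varepsilon)((x\otimes1)e(1\otimes y))=\varepsilon(xy)$ for all $x,y$, where $e:=\Delta(1)$, and $(\varepsilon_s\otimes\mathrm{id})\Delta(x)=(1\otimes x)e$ for all $x$, where $\varepsilon_s:=\mu(S\otimes\mathrm{id})\Delta$. The target Cartan subalgebra is $N_t=\{x\in M:\Delta(x)=e(x\otimes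 1)=(x\otimes1)e\}$. *)

theory Defs
  imports Complex_Main
begin

text \<open>Concrete model: a finite-dimensional complex vector space M is represented as
  the coordinate space 'i \<Rightarrow> complex for a finite index type 'i (a chosen linear basis);
  M \<otimes> M is ('i \<times> 'i) \<Rightarrow> complex, M \<otimes> M \<otimes> M is ('i \<times> 'i \<times> 'i) \<Rightarrow> complex,
  with x \<otimes> y = (\<lambda>(a,b). x a * y b).  Maps out of tensor products are the linear
  extensions, written via the standard basis.\<close>

definition vadd :: "('a \<Rightarrow> complex) \<Rightarrow> ('a \<Rightarrow> complex) \<Rightarrow> ('a \<Rightarrow> complex)" where
  "vadd x y = (\<lambda>j. x j + y j)"

definition vscale :: "complex \<Rightarrow> ('a \<Rightarrow> complex) \<Rightarrow> ('a \<Rightarrow> complex)" where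
  "vscale c x = (\<lambda>j. c * x j)"

definition vzero :: "'a \<Rightarrow> complex" where
  "vzero = (\<lambda>j. 0)"

definition clinear :: "(('a \<Rightarrow> complex) \<Rightarrow> ('b \<Rightarrow> complex)) \<Rightarrow> bool" where
  "clinear f \<longleftrightarrow> (\<forall>x y. f (vadd x y) = vadd (f x) (f y)) \<and> (\<forall>c x. f (vscale c x) = vscale c (f x))"

definition clinear_functional :: "(('a \<Rightarrow> complex) \<Rightarrow> complex) \<Rightarrow> bool" where
  "clinear_functional f \<longleftrightarrow> (\<forall>x y. f (vadd x y) = f x + f y) \<and> (\<forall>c x. f (vscale c x) = c * f x)"

definition basis_vec :: "'a \<Rightarrow> ('a \<Rightarrow> complex)" where
  "basis_vec a = (\<lambda>j. if j = a then 1 else 0)"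

definition tens :: "('i \<Rightarrow> complex) \<Rightarrow> ('i \<Rightarrow> complex) \<Rightarrow> ('i \<times> 'i \<Rightarrow> complex)" where
  "tens x y = (\<lambda>(a, b). x a * y b)"

text \<open>Multiplication on M \<otimes> M: bilinear extension of (x\<otimes>y)(x'\<otimes>y') = xx' \<otimes> yy'.\<close>
definition tmult :: "(('i::finite \<Rightarrow> complex) \<Rightarrow> ('i \<Rightarrow> complex) \<Rightarrow> ('i \<Rightarrow> complex))
    \<Rightarrow> ('i \<times> 'i \<Rightarrow> complex) \<Rightarrow> ('i \<times> 'i \<Rightarrow> complex) \<Rightarrow> ('i \<times> 'i \<Rightarrow> complex)" where
  "tmult mult T U = (\<lambda>(j, k). \<Sum>a\<in>UNIV. \<Sum>b\<in>UNIV. \<Sum>c\<in>UNIV. \<Sum>d\<in>UNIV.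
      T (a, b) * U (c, d) * mult (basis_vec a) (basis_vec c) j * mult (basis_vec b) (basis_vec d) k)"

text \<open>Involution on M \<otimes> M: antilinear extension of (x\<otimes>y)* = x* \<otimes> y*.\<close>
definition tstar :: "(('i::finite \<Rightarrow> complex) \<Rightarrow> ('i \<Rightarrow> complex))
    \<Rightarrow> ('i \<times> 'i \<Rightarrow> complex) \<Rightarrow> ('i \<times> 'i \<Rightarrow> complex)" where
  "tstar star T = (\<lambda>(j, k). \<Sum>a\<in>UNIV. \<Sum>b\<in>UNIV.
      cnj (T (a, b)) * star (basis_vec a) j * star (basis_vec b) k)"

definition flip :: "('i \<times> 'i \<Rightarrow> complex) \<Rightarrow> ('i \<times> 'i \<Rightarrow> complex)" where
  "flip T = (\<lambda>(j, k). T (k, j))"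

text \<open>f \<otimes> g : M \<otimes> M \<rightarrow> M \<otimes> M for linear f, g : M \<rightarrow> M.\<close>
definition map_both :: "(('i::finite \<Rightarrow> complex) \<Rightarrow> ('i \<Rightarrow> complex)) \<Rightarrow> (('i \<Rightarrow> complex) \<Rightarrow> ('i \<Rightarrow> complex))
    \<Rightarrow> ('i \<times> 'i \<Rightarrow> complex) \<Rightarrow> ('i \<times> 'i \<Rightarrow> complex)" where
  "map_both f g T = (\<lambda>(j, k). \<Sum>a\<in>UNIV. \<Sum>b\<in>UNIV. T (a, b) * f (basis_vec a) j * g (basis_vec b) k)"

text \<open>(\<Delta> \<otimes> id) and (id \<otimes> \<Delta>) : M \<otimes> M \<rightarrow> M \<otimes> M \<otimes> M.\<close>
definition comult_left :: "(('i::finite \<Rightarrow> complex) \<Rightarrow> ('i \<times> 'i \<Rightarrow> complex))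
    \<Rightarrow> ('i \<times> 'i \<Rightarrow> complex) \<Rightarrow> ('i \<times> 'i \<times> 'i \<Rightarrow> complex)" where
  "comult_left D T = (\<lambda>(j, k, l). \<Sum>a\<in>UNIV. T (a, l) * D (basis_vec a) (j, k))"

definition comult_right :: "(('i::finite \<Rightarrow> complex) \<Rightarrow> ('i \<times> 'i \<Rightarrow> complex))
    \<Rightarrow> ('i \<times> 'i \<Rightarrow> complex) \<Rightarrow> ('i \<times> 'i \<times> 'i \<Rightarrow> complex)" where
  "comult_right D T = (\<lambda>(j, k, l). \<Sum>b\<in>UNIV. T (j, b) * D (basis_vec b) (k, l))"

text \<open>(\<epsilon> \<otimes> id), (id \<otimes> \<epsilon>) : M \<otimes> M \<rightarrow> M and (\<epsilon> \<otimes> \<epsilon>) : M \<otimes> M \<rightarrow> \<complex>.\<close>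
definition functional_left :: "(('i::finite \<Rightarrow> complex) \<Rightarrow> complex) \<Rightarrow> ('i \<times> 'i \<Rightarrow> complex) \<Rightarrow> ('i \<Rightarrow> complex)" where
  "functional_left eps T = (\<lambda>k. \<Sum>a\<in>UNIV. eps (basis_vec a) * T (a, k))"

definition functional_right :: "(('i::finite \<Rightarrow> complex) \<Rightarrow> complex) \<Rightarrow> ('i \<times> 'i \<Rightarrow> complex) \<Rightarrow> ('i \<Rightarrow> complex)" where
  "functional_right eps T = (\<lambda>j. \<Sum>b\<in>UNIV. T (j, b) * eps (basis_vec b))"

definition functional_both :: "(('i::finite \<Rightarrow> complex) \<Rightarrow> complex) \<Rightarrow> ('i \<times> 'i \<Rightarrow> complex) \<Rightarrow> complex" where
  "functional_both eps T = (\<Sum>a\<in>UNIV. \<Sum>b\<in>UNIV. T (a, b) * eps (basis_vec a) * eps (basis_vec b))"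

text \<open>\<mu> : M \<otimes> M \<rightarrow> M, \<mu>(x \<otimes> y) = xy.\<close>
definition tmu :: "(('i::finite \<Rightarrow> complex) \<Rightarrow> ('i \<Rightarrow> complex) \<Rightarrow> ('i \<Rightarrow> complex))
    \<Rightarrow> ('i \<times> 'i \<Rightarrow> complex) \<Rightarrow> ('i \<Rightarrow> complex)" where
  "tmu mult T = (\<lambda>j. \<Sum>a\<in>UNIV. \<Sum>b\<in>UNIV. T (a, b) * mult (basis_vec a) (basis_vec b) j)"

text \<open>Finite-dimensional (unital) C*-algebra structure on 'i \<Rightarrow> complex: a unital associative
  *-algebra admitting a C*-norm (completeness is automatic in finite dimension).\<close>
definition C_star_algebra :: "(('i::finite \<Rightarrow> complex) \<Rightarrow> ('i \<Rightarrow> complex) \<Rightarrow> ('i \<Rightarrow> complex))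
    \<Rightarrow> ('i \<Rightarrow> complex) \<Rightarrow> (('i \<Rightarrow> complex) \<Rightarrow> ('i \<Rightarrow> complex)) \<Rightarrow> bool" where
  "C_star_algebra mult one star \<longleftrightarrow>
     (\<forall>x. clinear (mult x) \<and> clinear (\<lambda>y. mult y x)) \<and>
     (\<forall>x y z. mult (mult x y) z = mult x (mult y z)) \<and>
     (\<forall>x. mult one x = x \<and> mult x one = x) \<and>
     (\<forall>x y. star (vadd x y) = vadd (star x) (star y)) \<and>
     (\<forall>c x. star (vscale c x) = vscale (cnj c) (star x)) \<and>
     (\<forall>x. star (star x) = x) \<and>
     (\<forall>x y. star (mult x y) = mult (star y) (star x)) \<and>
     (\<exists>N :: ('i \<Rightarrow> complex) \<Rightarrow> real.
        (\<forall>x. N x = 0 \<longleftrightarrow> x = vzero) \<and>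
        (\<forall>x y. N (vadd x y) \<le> N x + N y) \<and>
        (\<forall>c x. N (vscale c x) = cmod c * N x) \<and>
        (\<forall>x y. N (mult x y) \<le> N x * N y) \<and>
        (\<forall>x. N (mult (star x) x) = (N x)\<^sup>2))"

definition eps_s :: "(('i::finite \<Rightarrow> complex) \<Rightarrow> ('i \<Rightarrow> complex) \<Rightarrow> ('i \<Rightarrow> complex))
    \<Rightarrow> (('i \<Rightarrow> complex) \<Rightarrow> ('i \<times> 'i \<Rightarrow> complex)) \<Rightarrow> (('i \<Rightarrow> complex) \<Rightarrow> ('i \<Rightarrow> complex))
    \<Rightarrow> ('i \<Rightarrow> complex) \<Rightarrow> ('i \<Rightarrow> complex)" where
  "eps_s mult Delta S x = tmu mult (map_both S id (Delta x))"

definition weak_Kac_algebra :: "(('i::finite \<Rightarrow> complex) \<Rightarrow> ('i \<Rightarrow> complex) \<Rightarrow> ('i \<Rightarrow> complex))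
    \<Rightarrow> ('i \<Rightarrow> complex) \<Rightarrow> (('i \<Rightarrow> complex) \<Rightarrow> ('i \<Rightarrow> complex))
    \<Rightarrow> (('i \<Rightarrow> complex) \<Rightarrow> ('i \<times> 'i \<Rightarrow> complex)) \<Rightarrow> (('i \<Rightarrow> complex) \<Rightarrow> ('i \<Rightarrow> complex))
    \<Rightarrow> (('i \<Rightarrow> complex) \<Rightarrow> complex) \<Rightarrow> bool" where
  "weak_Kac_algebra mult one star Delta S eps \<longleftrightarrow>
     C_star_algebra mult one star \<and>
     \<comment> \<open>\<Delta>: injective, not necessarily unital *-homomorphism, coassociative\<close>
     clinear Delta \<and>
     (\<forall>x y. Delta (mult x y) = tmult mult (Delta x) (Delta y)) \<and>
     (\<forall>x. Delta (star x) = tstar star (Delta x)) \<and>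
     inj Delta \<and>
     (\<forall>x. comult_left Delta (Delta x) = comult_right Delta (Delta x)) \<and>
     \<comment> \<open>antipode S\<close>
     clinear S \<and> S one = one \<and>
     (\<forall>x y. S (mult x y) = mult (S y) (S x)) \<and>
     (\<forall>x. S (star x) = star (S x)) \<and>
     bij S \<and> (\<forall>x. S (S x) = x) \<and>
     (\<forall>x. map_both S S (Delta x) = flip (Delta (S x))) \<and>
     \<comment> \<open>counit \<epsilon>\<close>
     clinear_functional eps \<and>
     (\<forall>x. functional_left eps (Delta x) = x) \<and>
     (\<forall>x. functional_right eps (Delta x) = x) \<and>
     (\<forall>x. eps (S x) = eps x) \<and>
     (\<forall>x. eps (star x) = cnj (eps x)) \<and>
     (\<forall>x y. functional_both eps (tmult mult (tmult mult (tens x one) (Delta one)) (tens one y))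
             = eps (mult x y)) \<and>
     (\<forall>x. map_both (eps_s mult Delta S) id (Delta x) = tmult mult (tens one x) (Delta one))"

definition target_Cartan :: "(('i::finite \<Rightarrow> complex) \<Rightarrow> ('i \<Rightarrow> complex) \<Rightarrow> ('i \<Rightarrow> complex))
    \<Rightarrow> ('i \<Rightarrow> complex) \<Rightarrow> (('i \<Rightarrow> complex) \<Rightarrow> ('i \<times> 'i \<Rightarrow> complex)) \<Rightarrow> ('i \<Rightarrow> complex) set" where
  "target_Cartan mult one Delta =
     {x. Delta x = tmult mult (Delta one) (tens x one) \<and> Delta x = tmult mult (tens x one) (Delta one)}"

definition lincomb :: "('a \<Rightarrow> complex) list \<Rightarrow> (nat \<Rightarrow> complex) \<Rightarrow> ('a \<Rightarrow> complex)" where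
  "lincomb bs c = (\<lambda>j. \<Sum>k<length bs. c k * (bs ! k) j)"

definition is_basis_of :: "('a \<Rightarrow> complex) set \<Rightarrow> ('a \<Rightarrow> complex) list \<Rightarrow> bool" where
  "is_basis_of V bs \<longleftrightarrow> set bs \<subseteq> V \<and>
     (\<forall>c. lincomb bs c = vzero \<longrightarrow> (\<forall>k<length bs. c k = 0)) \<and>
     (\<forall>v\<in>V. \<exists>c. v = lincomb bs c)"

definition coord :: "('a \<Rightarrow> complex) list \<Rightarrow> ('a \<Rightarrow> complex) \<Rightarrow> nat \<Rightarrow> complex" where
  "coord bs v = (SOME c. v = lincomb bs c)"

definition op_trace :: "('a \<Rightarrow> complex) set \<Rightarrow> (('a \<Rightarrow> complex) \<Rightarrow> ('a \<Rightarrow> complex)) \<Rightarrow> complex" where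
  "op_trace V f = (let bs = (SOME bs. is_basis_of V bs) in \<Sum>k<length bs. coord bs (f (bs ! k)) k)"

end

theory Submission
  imports Defs "HOL-Library.Function_Algebras"
begin

text \<open>The map \<open>P = S \<circ> \<epsilon>\<^sub>s\<close> is a linear projection of \<open>M\<close> onto \<open>N\<^sub>t\<close>:
  \<open>\<epsilon>\<^sub>s(x) = (id \<otimes> \<epsilon>)((1 \<otimes> x)\<Delta>(1))\<close> is a slice of \<open>\<Delta>(1)\<close>, such slices lie in the
  source subalgebra \<open>N\<^sub>s\<close>, the antipode maps \<open>N\<^sub>s\<close> into \<open>N\<^sub>t\<close>, and \<open>\<epsilon>\<^sub>s(y) = S(y)\<close> for
  \<open>y \<in> N\<^sub>t\<close>. Since \<open>N\<^sub>t\<close> is a subalgebra, \<open>Tr(L\<^sub>x|N\<^sub>t) = Tr(L\<^sub>x \<circ> P)\<close>, a trace over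
  all of \<open>M\<close>, and in coordinates this trace collapses to
  \<open>\<epsilon>(x \<mu>(S \<otimes> id)\<Delta>(1)) = \<epsilon>(x \<epsilon>\<^sub>s(1)) = \<epsilon>(x)\<close>.\<close>

section \<open>Coordinates and linear maps\<close>

abbreviation bv :: "'a \<Rightarrow> 'a \<Rightarrow> complex" where
  "bv \<equiv> basis_vec"

lemma sum_mult_basis_vec [simp]:
  fixes f :: "'a::finite \<Rightarrow> complex"
  shows "(\<Sum>a\<in>UNIV. f a * bv a j) = f j"
    and "(\<Sum>a\<in>UNIV. bv a j * f a) = f j"
    and "(\<Sum>a\<in>UNIV. f a * bv j a) = f j"
    and "(\<Sum>a\<in>UNIV. bv j a * f a) = f j"
  by (simp_all add: basis_vec_def if_distrib[of "\<lambda>x. _ * x"] if_distrib[of "\<lambda>x. x * _"] cong: if_cong)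

lemma basis_vec_pair: "bv (a, b) = tens (bv a) (bv b)"
  by (auto simp: basis_vec_def tens_def)

lemma sum_fun_apply: "sum f A j = (\<Sum>a\<in>A. f a j)"
  by (induction A rule: infinite_finite_induct) auto

lemma sum_swap_inner:
  "(\<Sum>x\<in>A. \<Sum>y\<in>B. \<Sum>z\<in>C. f x y z) = (\<Sum>x\<in>A. \<Sum>z\<in>C. \<Sum>y\<in>B. f x y z)"
  by (rule sum.cong[OF refl], rule sum.swap)

lemma sum_rotate3:
  "(\<Sum>z\<in>C. \<Sum>x\<in>A. \<Sum>y\<in>B. f x y z) = (\<Sum>x\<in>A. \<Sum>y\<in>B. \<Sum>z\<in>C. f x y z)"
  by (subst sum.swap) (rule sum_swap_inner)

lemma sum_reverse3:
  "(\<Sum>x\<in>A. \<Sum>y\<in>B. \<Sum>z\<in>C. f x y z) = (\<Sum>z\<in>C. \<Sum>y\<in>B. \<Sum>x\<in>A. f x y z)"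
  by (subst sum_swap_inner) (rule sum_rotate3[symmetric])

lemma sum_swap_pairs:
  "(\<Sum>a\<in>A. \<Sum>b\<in>B. \<Sum>c\<in>C. \<Sum>d\<in>D. f a b c d) = (\<Sum>c\<in>C. \<Sum>d\<in>D. \<Sum>a\<in>A. \<Sum>b\<in>B. f a b c d)"
proof -
  have "(\<Sum>a\<in>A. \<Sum>b\<in>B. \<Sum>c\<in>C. \<Sum>d\<in>D. f a b c d) = (\<Sum>a\<in>A. \<Sum>c\<in>C. \<Sum>b\<in>B. \<Sum>d\<in>D. f a b c d)"
    by (rule sum_swap_inner)
  also have "\<dots> = (\<Sum>c\<in>C. \<Sum>a\<in>A. \<Sum>d\<in>D. \<Sum>b\<in>B. f a b c d)"
    by (subst sum.swap) (rule sum.cong[OF refl], rule sum_swap_inner)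
  also have "\<dots> = (\<Sum>c\<in>C. \<Sum>d\<in>D. \<Sum>a\<in>A. \<Sum>b\<in>B. f a b c d)"
    by (rule sum_swap_inner)
  finally show ?thesis .
qed

lemma clinear_zero:
  assumes "clinear f"
  shows "f (\<lambda>j. 0) = (\<lambda>j. 0)"
proof -
  have "f (vscale 0 (\<lambda>j. 0)) = vscale 0 (f (\<lambda>j. 0))"
    using assms by (simp add: clinear_def)
  then show ?thesis by (simp add: vscale_def)
qed

lemma clinear_sum:
  assumes "clinear f" "finite A"
  shows "f (\<lambda>j. \<Sum>a\<in>A. g a j) = (\<lambda>j. \<Sum>a\<in>A. f (g a) j)"
  using assms(2)
proof (induction A rule: finite_induct)
  case empty
  then show ?case using clinear_zero[OF assms(1)] by simp
next
  case (insert x F)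
  have "(\<lambda>j. \<Sum>a\<in>insert x F. g a j) = vadd (g x) (\<lambda>j. \<Sum>a\<in>F. g a j)"
    using insert by (simp add: vadd_def)
  then have "f (\<lambda>j. \<Sum>a\<in>insert x F. g a j) = vadd (f (g x)) (\<lambda>j. \<Sum>a\<in>F. f (g a) j)"
    using assms(1) insert by (simp add: clinear_def)
  then show ?case
    using insert by (simp add: vadd_def)
qed

lemma clinear_lincomb:
  assumes "clinear f" "finite A"
  shows "f (\<lambda>j. \<Sum>a\<in>A. c a * g a j) = (\<lambda>j. \<Sum>a\<in>A. c a * f (g a) j)"
proof -
  have "f (\<lambda>j. \<Sum>a\<in>A. c a * g a j) = f (\<lambda>j. \<Sum>a\<in>A. vscale (c a) (g a) j)"
    by (simp add: vscale_def)
  also have "\<dots> = (\<lambda>j. \<Sum>a\<in>A. f (vscale (c a) (g a)) j)"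
    by (rule clinear_sum[OF assms])
  also have "\<dots> = (\<lambda>j. \<Sum>a\<in>A. c a * f (g a) j)"
    using assms(1) by (simp add: clinear_def vscale_def)
  finally show ?thesis .
qed

lemma clinear_expand:
  fixes x :: "'a::finite \<Rightarrow> complex"
  assumes "clinear f"
  shows "f x k = (\<Sum>a\<in>UNIV. x a * f (bv a) k)"
proof -
  have "f x = f (\<lambda>j. \<Sum>a\<in>UNIV. x a * bv a j)" by simp
  also have "\<dots> = (\<lambda>j. \<Sum>a\<in>UNIV. x a * f (bv a) j)" by (rule clinear_lincomb[OF assms]) simp
  finally show ?thesis by simp
qed

lemma clinear_functional_expand:
  fixes x :: "'a::finite \<Rightarrow> complex"
  assumes "clinear_functional f"
  shows "f x = (\<Sum>a\<in>UNIV. x a * f (bv a))"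
proof -
  have "clinear (\<lambda>y (u::unit). f y)"
    using assms by (auto simp: clinear_def clinear_functional_def vadd_def vscale_def)
  then have "(\<lambda>y (u::unit). f y) x () = (\<Sum>a\<in>UNIV. x a * (\<lambda>y (u::unit). f y) (bv a) ())"
    by (rule clinear_expand)
  then show ?thesis by simp
qed

lemma clinear_comp: "clinear f \<Longrightarrow> clinear g \<Longrightarrow> clinear (\<lambda>x. g (f x))"
  by (simp add: clinear_def)

lemma clinear_functional_comp:
  "clinear f \<Longrightarrow> clinear_functional g \<Longrightarrow> clinear_functional (\<lambda>x. g (f x))"
  by (simp add: clinear_def clinear_functional_def)

lemma clinear_basis_ext:
  fixes F G :: "('a::finite \<Rightarrow> complex) \<Rightarrow> ('b \<Rightarrow> complex)"
  assumes "clinear F" "clinear G" "\<And>p. F (bv p) = G (bv p)"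
  shows "F T = G T"
proof
  fix q
  have "F T q = (\<Sum>p\<in>UNIV. T p * F (bv p) q)" by (rule clinear_expand[OF assms(1)])
  also have "\<dots> = (\<Sum>p\<in>UNIV. T p * G (bv p) q)" by (simp add: assms(3))
  also have "\<dots> = G T q" by (rule clinear_expand[OF assms(2), symmetric])
  finally show "F T q = G T q" .
qed

section \<open>Bases and traces of subspaces\<close>

lemma lincomb_clinear:
  "clinear f \<Longrightarrow> f (lincomb bs c) = (\<lambda>j. \<Sum>k<length bs. c k * f (bs ! k) j)"
  unfolding lincomb_def by (rule clinear_lincomb) simp_all

lemma lincomb_coord:
  assumes "is_basis_of V bs" "v \<in> V"
  shows "v = lincomb bs (coord bs v)"
proof -
  from assms have "\<exists>c. v = lincomb bs c" by (auto simp: is_basis_of_def)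
  then show ?thesis unfolding coord_def by (rule someI_ex)
qed

lemma lincomb_coeff_unique:
  assumes "is_basis_of V bs" "lincomb bs c = lincomb bs c'" "k < length bs"
  shows "c k = c' k"
proof -
  have "(\<Sum>k<length bs. c k * (bs ! k) j) = (\<Sum>k<length bs. c' k * (bs ! k) j)" for j
    using fun_cong[OF assms(2), of j] unfolding lincomb_def by simp
  then have "lincomb bs (\<lambda>k. c k - c' k) = vzero"
    unfolding lincomb_def vzero_def by (simp add: left_diff_distrib sum_subtractf)
  with assms(1,3) have "c k - c' k = 0" unfolding is_basis_of_def by blast
  then show ?thesis by simp
qed

lemma lincomb_indicator: "k < length bs \<Longrightarrow> lincomb bs (\<lambda>l. if l = k then 1 else 0) = bs ! k"
  unfolding lincomb_def by (rule ext) (simp add: if_distrib[of "\<lambda>x. x * _"] cong: if_cong)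

lemma is_basis_of_exists:
  fixes V :: "('a::finite \<Rightarrow> complex) set"
  shows "\<exists>bs. is_basis_of V bs"
proof -
  interpret vs: vector_space "vscale :: complex \<Rightarrow> ('a \<Rightarrow> complex) \<Rightarrow> ('a \<Rightarrow> complex)"
    by unfold_locales (auto simp: vscale_def algebra_simps)
  have scale_sum: "(\<Sum>x\<in>X. vscale (u x) (g x)) = (\<lambda>j. \<Sum>x\<in>X. u x * g x j)" for X u g
    by (rule ext) (simp add: sum_fun_apply vscale_def)
  obtain B where B: "B \<subseteq> V" "vs.independent B" "V \<subseteq> vs.span B"
    by (rule vs.basis_exists)
  have "v \<in> vs.span (range bv)" for v :: "'a \<Rightarrow> complex"
  proof -
    have "v = (\<Sum>r\<in>UNIV. vscale (v r) (bv r))" by (simp add: scale_sum)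
    also have "\<dots> \<in> vs.span (range bv)"
      by (intro vs.span_sum vs.span_scale vs.span_base) auto
    finally show ?thesis .
  qed
  then have "finite B"
    using vs.independent_span_bound[OF _ B(2), of "range bv"] by auto
  then obtain bs where bs: "set bs = B" "distinct bs"
    using finite_distinct_list by blast
  have sum_B: "(\<Sum>v\<in>B. vscale (u v) v) = lincomb bs (\<lambda>k. u (bs ! k))" for u
    by (simp add: bs(1)[symmetric] scale_sum sum.distinct_set_conv_list[OF bs(2)]
        sum_list_sum_nth lincomb_def atLeast0LessThan)
  have "is_basis_of V bs"
    unfolding is_basis_of_def
  proof (intro conjI allI impI ballI)
    show "set bs \<subseteq> V" using bs B by simp
  next
    fix c k assume c: "lincomb bs c = vzero" and k: "k < length bs"
    define u where "u v = c (the_inv_into {..<length bs} ((!) bs) v)" for v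
    have inj: "inj_on ((!) bs) {..<length bs}"
      using bs(2) by (simp add: inj_on_nth)
    have u: "u (bs ! l) = c l" if "l < length bs" for l
      using the_inv_into_f_f[OF inj] that by (simp add: u_def)
    have "lincomb bs (\<lambda>k. u (bs ! k)) = lincomb bs c"
      unfolding lincomb_def by (intro ext sum.cong) (simp_all add: u)
    then have "(\<Sum>v\<in>B. vscale (u v) v) = 0"
      using c by (simp add: sum_B vzero_def zero_fun_def)
    then have "\<forall>v\<in>B. u v = 0"
      using B(2) \<open>finite B\<close> vs.dependent_finite by blast
    then show "c k = 0"
      using u[OF k] k bs(1) by auto
  next
    fix v assume "v \<in> V"
    then obtain u where "v = (\<Sum>w\<in>B. vscale (u w) w)"
      using B(3) vs.span_finite[OF \<open>finite B\<close>] by blast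
    then show "\<exists>c. v = lincomb bs c" unfolding sum_B by blast
  qed
  then show ?thesis by blast
qed

lemma coord_projection_dual:
  fixes V :: "('a::finite \<Rightarrow> complex) set"
  assumes B: "is_basis_of V bs"
    and P: "clinear P" "\<And>w. P w \<in> V" "\<And>v. v \<in> V \<Longrightarrow> P v = v"
    and kl: "k < length bs" "l < length bs"
  shows "(\<Sum>r\<in>UNIV. (bs ! k) r * coord bs (P (bv r)) l) = (if l = k then 1 else 0)"
proof -
  have Pc: "P (bv r) = lincomb bs (coord bs (P (bv r)))" for r
    by (rule lincomb_coord[OF B P(2)])
  have "bs ! k \<in> V" using B kl unfolding is_basis_of_def by auto
  then have "lincomb bs (\<lambda>l. if l = k then 1 else 0) = P (bs ! k)"
    using P(3) lincomb_indicator[OF kl(1)] by simp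
  also have "\<dots> = (\<lambda>j. \<Sum>r\<in>UNIV. (bs ! k) r * lincomb bs (coord bs (P (bv r))) j)"
    by (rule ext, subst clinear_expand[OF P(1)]) (simp only: Pc[symmetric])
  also have "\<dots> = lincomb bs (\<lambda>l. \<Sum>r\<in>UNIV. (bs ! k) r * coord bs (P (bv r)) l)"
    unfolding lincomb_def
    by (rule ext, simp add: sum_distrib_left sum_distrib_right, subst sum.swap, simp add: mult_ac)
  finally have "lincomb bs (\<lambda>l. if l = k then 1 else 0)
      = lincomb bs (\<lambda>l. \<Sum>r\<in>UNIV. (bs ! k) r * coord bs (P (bv r)) l)" .
  from lincomb_coeff_unique[OF B this kl(2)] show ?thesis by simp
qed

lemma op_trace_via_projection:
  fixes V :: "('a::finite \<Rightarrow> complex) set"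
  assumes P: "clinear P" "\<And>w. P w \<in> V" "\<And>v. v \<in> V \<Longrightarrow> P v = v"
    and T: "clinear T" "\<And>v. v \<in> V \<Longrightarrow> T v \<in> V"
  shows "op_trace V T = (\<Sum>r\<in>UNIV. T (P (bv r)) r)"
proof -
  define bs where "bs = (SOME bs. is_basis_of V bs)"
  have B: "is_basis_of V bs"
    unfolding bs_def using is_basis_of_exists by (rule someI_ex)
  define n where "n = length bs"
  define c where "c r = coord bs (P (bv r))" for r
  define d where "d l = coord bs (T (bs ! l))" for l
  have Pc: "P (bv r) = lincomb bs (c r)" for r
    unfolding c_def by (rule lincomb_coord[OF B P(2)])
  have Td: "T (bs ! l) = lincomb bs (d l)" if "l < n" for l
    unfolding d_def using B that by (intro lincomb_coord[OF B] T(2)) (auto simp: is_basis_of_def n_def)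
  have "(\<Sum>r\<in>UNIV. T (P (bv r)) r) = (\<Sum>r\<in>UNIV. \<Sum>l<n. c r l * (\<Sum>m<n. d l m * (bs ! m) r))"
    unfolding Pc lincomb_clinear[OF T(1)] n_def
    by (intro sum.cong refl) (simp add: Td lincomb_def n_def)
  also have "\<dots> = (\<Sum>r\<in>UNIV. \<Sum>l<n. \<Sum>m<n. d l m * ((bs ! m) r * c r l))"
    by (simp add: sum_distrib_left mult_ac)
  also have "\<dots> = (\<Sum>l<n. \<Sum>m<n. \<Sum>r\<in>UNIV. d l m * ((bs ! m) r * c r l))"
    by (rule sum_rotate3)
  also have "\<dots> = (\<Sum>l<n. \<Sum>m<n. d l m * (if l = m then 1 else 0))"
    unfolding sum_distrib_left[symmetric] n_def
    by (intro sum.cong refl) (simp add: coord_projection_dual[OF B P] c_def)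
  also have "\<dots> = (\<Sum>l<n. d l l)"
    by (simp add: if_distrib[of "\<lambda>x. _ * x"] cong: if_cong)
  finally show ?thesis
    by (simp add: op_trace_def Let_def bs_def d_def n_def)
qed

section \<open>Tensor coordinates over a unital algebra\<close>

lemma map_both_id_apply: "map_both f id T (j, k) = (\<Sum>p\<in>UNIV. T (p, k) * f (bv p) j)"
proof -
  have "map_both f id T (j, k) = (\<Sum>p\<in>UNIV. f (bv p) j * (\<Sum>q\<in>UNIV. T (p, q) * bv q k))"
    by (simp add: map_both_def sum_distrib_left mult_ac)
  then show ?thesis by (simp add: mult_ac)
qed

lemma flip_flip [simp]: "flip (flip T) = T"
  by (auto simp: flip_def)

locale unital_coord_algebra =
  fixes mult :: "('i::finite \<Rightarrow> complex) \<Rightarrow> ('i \<Rightarrow> complex) \<Rightarrow> ('i \<Rightarrow> complex)"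
    and one :: "'i \<Rightarrow> complex"
  assumes mult_clinear_right: "clinear (mult x)"
    and mult_clinear_left: "clinear (\<lambda>y. mult y x)"
    and mult_assoc: "mult (mult x y) z = mult x (mult y z)"
    and mult_one_left [simp]: "mult one x = x"
    and mult_one_right [simp]: "mult x one = x"
begin

lemma mult_expand_left: "mult y w k = (\<Sum>b\<in>UNIV. y b * mult (bv b) w k)"
  by (rule clinear_expand[OF mult_clinear_left])

lemma mult_expand_right: "mult w y k = (\<Sum>c\<in>UNIV. y c * mult w (bv c) k)"
  by (rule clinear_expand[OF mult_clinear_right])

lemma tmult_tens_left_apply:
  "tmult mult (tens x y) U (j, k) = (\<Sum>c\<in>UNIV. \<Sum>d\<in>UNIV. U (c, d) * mult x (bv c) j * mult y (bv d) k)"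
proof -
  have "tmult mult (tens x y) U (j, k) = (\<Sum>a\<in>UNIV. \<Sum>b\<in>UNIV. \<Sum>c\<in>UNIV. \<Sum>d\<in>UNIV.
      x a * y b * U (c, d) * mult (bv a) (bv c) j * mult (bv b) (bv d) k)"
    by (simp add: tmult_def tens_def)
  also have "\<dots> = (\<Sum>c\<in>UNIV. \<Sum>d\<in>UNIV. \<Sum>a\<in>UNIV. \<Sum>b\<in>UNIV.
      x a * y b * U (c, d) * mult (bv a) (bv c) j * mult (bv b) (bv d) k)"
    by (rule sum_swap_pairs)
  also have "\<dots> = (\<Sum>c\<in>UNIV. \<Sum>d\<in>UNIV. U (c, d) * mult x (bv c) j * mult y (bv d) k)"
    by (simp add: mult_expand_left[of x] mult_expand_left[of y] sum_distrib_left sum_distrib_right mult_ac)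
  finally show ?thesis .
qed

lemma tmult_tens_right_apply:
  "tmult mult T (tens x y) (j, k) = (\<Sum>a\<in>UNIV. \<Sum>b\<in>UNIV. T (a, b) * mult (bv a) x j * mult (bv b) y k)"
  by (simp add: tmult_def tens_def mult_expand_right[of _ x] mult_expand_right[of _ y]
      sum_distrib_left sum_distrib_right mult_ac)

lemma tmult_one_tens_left_apply:
  "tmult mult (tens one z) U (j, k) = (\<Sum>d\<in>UNIV. U (j, d) * mult z (bv d) k)"
proof -
  have "tmult mult (tens one z) U (j, k) = (\<Sum>c\<in>UNIV. bv c j * (\<Sum>d\<in>UNIV. U (c, d) * mult z (bv d) k))"
    by (simp add: tmult_tens_left_apply sum_distrib_left mult_ac)
  then show ?thesis by simp
qed

lemma tmult_tens_one_left_apply: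
  "tmult mult (tens y one) U (j, k) = (\<Sum>c\<in>UNIV. U (c, k) * mult y (bv c) j)"
proof -
  have "tmult mult (tens y one) U (j, k) = (\<Sum>c\<in>UNIV. mult y (bv c) j * (\<Sum>d\<in>UNIV. U (c, d) * bv d k))"
    by (simp add: tmult_tens_left_apply sum_distrib_left mult_ac)
  then show ?thesis by (simp add: mult_ac)
qed

lemma tmult_tens_one_right_apply:
  "tmult mult T (tens y one) (j, k) = (\<Sum>a\<in>UNIV. T (a, k) * mult (bv a) y j)"
proof -
  have "tmult mult T (tens y one) (j, k) = (\<Sum>a\<in>UNIV. mult (bv a) y j * (\<Sum>b\<in>UNIV. T (a, b) * bv b k))"
    by (simp add: tmult_tens_right_apply sum_distrib_left mult_ac)
  then show ?thesis by (simp add: mult_ac)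
qed

lemma tmult_one_tens_right_apply:
  "tmult mult T (tens one z) (j, k) = (\<Sum>b\<in>UNIV. T (j, b) * mult (bv b) z k)"
proof -
  have "tmult mult T (tens one z) (j, k) = (\<Sum>a\<in>UNIV. bv a j * (\<Sum>b\<in>UNIV. T (a, b) * mult (bv b) z k))"
    by (simp add: tmult_tens_right_apply sum_distrib_left mult_ac)
  then show ?thesis by simp
qed

lemma flip_tmult_flip_right: "flip (tmult mult (flip T) (tens one u)) = tmult mult T (tens u one)"
  by (rule ext, clarify, simp add: flip_def tmult_one_tens_right_apply tmult_tens_one_right_apply)

lemma flip_tmult_flip_left: "flip (tmult mult (tens one u) (flip T)) = tmult mult (tens u one) T"
  by (rule ext, clarify, simp add: flip_def tmult_one_tens_left_apply tmult_tens_one_left_apply)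

lemma tmult_clinear_left: "clinear (\<lambda>T. tmult mult T U)"
  unfolding clinear_def
proof (intro conjI allI)
  fix T T'
  show "tmult mult (vadd T T') U = vadd (tmult mult T U) (tmult mult T' U)"
    by (rule ext, clarify, simp only: tmult_def vadd_def split distrib_right sum.distrib)
next
  fix c T
  show "tmult mult (vscale c T) U = vscale c (tmult mult T U)"
    by (rule ext, clarify, simp only: tmult_def vscale_def split mult.assoc sum_distrib_left)
qed

lemma tmult_clinear_right: "clinear (\<lambda>U. tmult mult T U)"
  unfolding clinear_def
proof (intro conjI allI)
  fix U U'
  show "tmult mult T (vadd U U') = vadd (tmult mult T U) (tmult mult T U')"
    by (rule ext, clarify, simp only: tmult_def vadd_def split distrib_right distrib_left sum.distrib)
next
  fix c U
  show "tmult mult T (vscale c U) = vscale c (tmult mult T U)"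
    by (rule ext, clarify, simp only: tmult_def vscale_def split sum_distrib_left, simp only: mult_ac)
qed

lemma tmult_tens: "tmult mult (tens x y) (tens x' y') = tens (mult x x') (mult y y')"
proof (rule ext, clarify)
  fix j k
  have "tmult mult (tens x y) (tens x' y') (j, k)
      = (\<Sum>c\<in>UNIV. \<Sum>d\<in>UNIV. (x' c * mult x (bv c) j) * (y' d * mult y (bv d) k))"
    by (simp only: tmult_tens_left_apply, simp add: tens_def mult_ac)
  also have "\<dots> = tens (mult x x') (mult y y') (j, k)"
    by (simp add: sum_product[symmetric] tens_def mult_expand_right[of x x'] mult_expand_right[of y y'])
  finally show "tmult mult (tens x y) (tens x' y') (j, k) = tens (mult x x') (mult y y') (j, k)" .
qed

lemma tmult_assoc: "tmult mult (tmult mult T U) V = tmult mult T (tmult mult U V)"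
proof -
  have "tmult mult (tmult mult (bv p) (bv q)) (bv r) = tmult mult (bv p) (tmult mult (bv q) (bv r))"
    for p q r
    by (cases p, cases q, cases r) (simp add: basis_vec_pair tmult_tens mult_assoc)
  then have "tmult mult (tmult mult (bv p) (bv q)) V = tmult mult (bv p) (tmult mult (bv q) V)" for p q
    by (rule clinear_basis_ext[where F = "\<lambda>V. tmult mult (tmult mult (bv p) (bv q)) V",
          OF tmult_clinear_right clinear_comp[OF tmult_clinear_right tmult_clinear_right]])
  then have "tmult mult (tmult mult (bv p) U) V = tmult mult (bv p) (tmult mult U V)" for p
    by (rule clinear_basis_ext[where F = "\<lambda>U. tmult mult (tmult mult (bv p) U) V",
          OF clinear_comp[OF tmult_clinear_right tmult_clinear_left]
          clinear_comp[OF tmult_clinear_left tmult_clinear_right]])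
  then show ?thesis
    by (rule clinear_basis_ext[where F = "\<lambda>T. tmult mult (tmult mult T U) V",
          OF clinear_comp[OF tmult_clinear_left tmult_clinear_left] tmult_clinear_left])
qed

end

section \<open>Weak Kac algebras\<close>

locale weak_Kac =
  fixes mult :: "('i::finite \<Rightarrow> complex) \<Rightarrow> ('i \<Rightarrow> complex) \<Rightarrow> ('i \<Rightarrow> complex)"
    and one :: "'i \<Rightarrow> complex"
    and star :: "('i \<Rightarrow> complex) \<Rightarrow> ('i \<Rightarrow> complex)"
    and Delta :: "('i \<Rightarrow> complex) \<Rightarrow> ('i \<times> 'i \<Rightarrow> complex)"
    and S :: "('i \<Rightarrow> complex) \<Rightarrow> ('i \<Rightarrow> complex)"
    and eps :: "('i \<Rightarrow> complex) \<Rightarrow> complex"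
  assumes weak_Kac_algebra: "weak_Kac_algebra mult one star Delta S eps"

sublocale weak_Kac \<subseteq> unital_coord_algebra mult one
  using weak_Kac_algebra by unfold_locales (simp_all add: weak_Kac_algebra_def C_star_algebra_def)

context weak_Kac
begin

lemma
  shows star_add: "star (vadd x y) = vadd (star x) (star y)"
    and star_scale: "star (vscale c x) = vscale (cnj c) (star x)"
    and star_star [simp]: "star (star x) = x"
    and star_mult: "star (mult x y) = mult (star y) (star x)"
    and Delta_clinear: "clinear Delta"
    and Delta_mult: "Delta (mult x y) = tmult mult (Delta x) (Delta y)"
    and Delta_star: "Delta (star x) = tstar star (Delta x)"
    and Delta_coassoc: "comult_left Delta (Delta x) = comult_right Delta (Delta x)"
    and S_clinear: "clinear S"
    and S_one [simp]: "S one = one"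
    and S_mult: "S (mult x y) = mult (S y) (S x)"
    and S_S [simp]: "S (S x) = x"
    and S_Delta: "map_both S S (Delta x) = flip (Delta (S x))"
    and eps_clinear: "clinear_functional eps"
    and counit_right: "functional_right eps (Delta x) = x"
    and eps_s_Delta: "map_both (eps_s mult Delta S) id (Delta x) = tmult mult (tens one x) (Delta one)"
  using weak_Kac_algebra by (simp_all add: weak_Kac_algebra_def C_star_algebra_def)

abbreviation e :: "'i \<times> 'i \<Rightarrow> complex" where
  "e \<equiv> Delta one"

abbreviation eps\<^sub>s :: "('i \<Rightarrow> complex) \<Rightarrow> ('i \<Rightarrow> complex)" where
  "eps\<^sub>s \<equiv> eps_s mult Delta S"

lemma S_expand: "S x j = (\<Sum>a\<in>UNIV. x a * S (bv a) j)"
  by (rule clinear_expand[OF S_clinear])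

lemma Delta_expand: "Delta x p = (\<Sum>a\<in>UNIV. x a * Delta (bv a) p)"
  by (rule clinear_expand[OF Delta_clinear])

lemma eps_expand: "eps x = (\<Sum>a\<in>UNIV. x a * eps (bv a))"
  by (rule clinear_functional_expand[OF eps_clinear])

lemma mult_S_left_expand: "mult (S w) v j = (\<Sum>p\<in>UNIV. w p * mult (S (bv p)) v j)"
  by (rule clinear_expand[OF clinear_comp[OF S_clinear mult_clinear_left]])

lemma mult_S_right_expand: "mult x (S z) k = (\<Sum>j\<in>UNIV. z j * mult x (S (bv j)) k)"
  by (rule clinear_expand[OF clinear_comp[OF S_clinear mult_clinear_right]])

lemma eps_mult_left_expand: "eps (mult w v) = (\<Sum>r\<in>UNIV. w r * eps (mult (bv r) v))"
  by (rule clinear_functional_expand[OF clinear_functional_comp[OF mult_clinear_left eps_clinear]])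

lemma eps_mult_right_expand: "eps (mult v w) = (\<Sum>r\<in>UNIV. w r * eps (mult v (bv r)))"
  by (rule clinear_functional_expand[OF clinear_functional_comp[OF mult_clinear_right eps_clinear]])

lemma star_expand: "star x j = (\<Sum>a\<in>UNIV. cnj (x a) * star (bv a) j)"
proof -
  let ?G = "\<lambda>y. star (\<lambda>i. cnj (y i))"
  have "clinear ?G"
    unfolding clinear_def
    using star_add[of "\<lambda>i. cnj (_ i)" "\<lambda>i. cnj (_ i)"] star_scale[of "cnj _" "\<lambda>i. cnj (_ i)"]
    by (simp add: vadd_def vscale_def)
  then have "?G (\<lambda>i. cnj (x i)) j = (\<Sum>a\<in>UNIV. cnj (x a) * ?G (bv a) j)"
    by (rule clinear_expand)
  moreover have cnj_bv: "(\<lambda>i. cnj (bv a i)) = bv a" for a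
    by (auto simp: basis_vec_def)
  ultimately show ?thesis by (simp only: cnj_bv complex_cnj_cnj)
qed

lemma eps_s_clinear: "clinear eps\<^sub>s"
proof -
  have "Delta (vadd x y) = vadd (Delta x) (Delta y)" "Delta (vscale c x) = vscale c (Delta x)" for x y c
    using Delta_clinear by (simp_all add: clinear_def)
  then show ?thesis
    unfolding clinear_def eps_s_def
    by (auto simp: tmu_def map_both_id_apply vadd_def vscale_def algebra_simps sum.distrib
        sum_distrib_left intro!: ext)
qed

lemma eps_s_expand: "eps\<^sub>s x j = (\<Sum>p\<in>UNIV. x p * eps\<^sub>s (bv p) j)"
  by (rule clinear_expand[OF eps_s_clinear])

lemma eps_s_Delta_apply:
  "(\<Sum>p\<in>UNIV. Delta x (p, k) * eps\<^sub>s (bv p) j) = (\<Sum>d\<in>UNIV. e (j, d) * mult x (bv d) k)"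
  using fun_cong[OF eps_s_Delta[of x], of "(j, k)"]
  by (simp add: map_both_id_apply tmult_one_tens_left_apply)

lemma Delta_one_coassoc_apply:
  "(\<Sum>a\<in>UNIV. e (a, l) * Delta (bv a) (j, k)) = (\<Sum>b\<in>UNIV. e (j, b) * Delta (bv b) (k, l))"
  using fun_cong[OF Delta_coassoc[of one], of "(j, k, l)"]
  by (simp add: comult_left_def comult_right_def)

lemma Delta_Delta_one_apply:
  "(\<Sum>b\<in>UNIV. e (j, b) * Delta (bv b) (k, l))
    = (\<Sum>a\<in>UNIV. \<Sum>d\<in>UNIV. e (j, d) * e (a, l) * mult (bv a) (bv d) k)"
proof -
  have e_eps_s: "(\<Sum>p\<in>UNIV. e (p, b) * eps\<^sub>s (bv p) j) = e (j, b)" for b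
    using eps_s_Delta_apply[of one b j] by simp
  have "(\<Sum>b\<in>UNIV. e (j, b) * Delta (bv b) (k, l))
      = (\<Sum>p\<in>UNIV. eps\<^sub>s (bv p) j * (\<Sum>b\<in>UNIV. e (p, b) * Delta (bv b) (k, l)))"
    by (simp add: e_eps_s[symmetric] sum_distrib_left sum_distrib_right, subst sum.swap, simp add: mult_ac)
  also have "\<dots> = (\<Sum>p\<in>UNIV. eps\<^sub>s (bv p) j * (\<Sum>a\<in>UNIV. e (a, l) * Delta (bv a) (p, k)))"
    by (simp add: Delta_one_coassoc_apply)
  also have "\<dots> = (\<Sum>a\<in>UNIV. e (a, l) * (\<Sum>p\<in>UNIV. Delta (bv a) (p, k) * eps\<^sub>s (bv p) j))"
    by (simp add: sum_distrib_left sum_distrib_right, subst sum.swap, simp add: mult_ac)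
  also have "\<dots> = (\<Sum>a\<in>UNIV. \<Sum>d\<in>UNIV. e (j, d) * e (a, l) * mult (bv a) (bv d) k)"
    by (simp add: eps_s_Delta_apply sum_distrib_left mult_ac)
  finally show ?thesis .
qed

lemma eps_s_apply: "eps\<^sub>s x j = (\<Sum>d\<in>UNIV. e (j, d) * eps (mult x (bv d)))"
proof -
  have counit: "(\<Sum>k\<in>UNIV. Delta x (p, k) * eps (bv k)) = x p" for p
    using fun_cong[OF counit_right[of x], of p] by (simp add: functional_right_def)
  have "eps\<^sub>s x j = (\<Sum>p\<in>UNIV. (\<Sum>k\<in>UNIV. Delta x (p, k) * eps (bv k)) * eps\<^sub>s (bv p) j)"
    by (simp only: counit eps_s_expand[of x])
  also have "\<dots> = (\<Sum>k\<in>UNIV. eps (bv k) * (\<Sum>p\<in>UNIV. Delta x (p, k) * eps\<^sub>s (bv p) j))"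
    by (simp add: sum_distrib_left sum_distrib_right, subst sum.swap, simp add: mult_ac)
  also have "\<dots> = (\<Sum>k\<in>UNIV. eps (bv k) * (\<Sum>d\<in>UNIV. e (j, d) * mult x (bv d) k))"
    by (simp only: eps_s_Delta_apply)
  also have "\<dots> = (\<Sum>d\<in>UNIV. e (j, d) * eps (mult x (bv d)))"
    by (simp add: eps_expand[of "mult x (bv _)"] sum_distrib_left sum_distrib_right,
        subst sum.swap, simp add: mult_ac)
  finally show ?thesis .
qed

lemma eps_s_one: "eps\<^sub>s one = one"
proof
  fix j
  show "eps\<^sub>s one j = one j"
    using fun_cong[OF counit_right[of one], of j] by (simp add: eps_s_apply functional_right_def)
qed

definition source_Cartan :: "('i \<Rightarrow> complex) set" where
  "source_Cartan = {z. Delta z = tmult mult (tens one z) e \<and> Delta z = tmult mult e (tens one z)}"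

definition right_slice :: "('i \<Rightarrow> complex) \<Rightarrow> ('i \<Rightarrow> complex)" where
  "right_slice \<phi> = (\<lambda>j. \<Sum>d\<in>UNIV. e (j, d) * \<phi> d)"

lemma Delta_right_slice_left: "Delta (right_slice \<phi>) = tmult mult (tens one (right_slice \<phi>)) e"
proof (rule ext, clarify)
  fix k l
  have "Delta (right_slice \<phi>) (k, l) = (\<Sum>j\<in>UNIV. (\<Sum>d\<in>UNIV. e (j, d) * \<phi> d) * Delta (bv j) (k, l))"
    by (subst Delta_expand) (simp add: right_slice_def)
  also have "\<dots> = (\<Sum>d\<in>UNIV. \<phi> d * (\<Sum>j\<in>UNIV. e (j, d) * Delta (bv j) (k, l)))"
    by (simp add: sum_distrib_left sum_distrib_right, subst sum.swap, simp add: mult_ac)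
  also have "\<dots> = (\<Sum>d\<in>UNIV. \<phi> d * (\<Sum>a\<in>UNIV. \<Sum>d'\<in>UNIV. e (k, d') * e (a, d) * mult (bv a) (bv d') l))"
    by (simp only: Delta_one_coassoc_apply Delta_Delta_one_apply)
  also have "\<dots> = (\<Sum>d\<in>UNIV. \<Sum>a\<in>UNIV. \<Sum>d'\<in>UNIV. \<phi> d * e (k, d') * e (a, d) * mult (bv a) (bv d') l)"
    by (simp add: sum_distrib_left mult_ac)
  also have "\<dots> = (\<Sum>d'\<in>UNIV. \<Sum>a\<in>UNIV. \<Sum>d\<in>UNIV. \<phi> d * e (k, d') * e (a, d) * mult (bv a) (bv d') l)"
    by (rule sum_reverse3)
  also have "\<dots> = (\<Sum>d'\<in>UNIV. e (k, d') * (\<Sum>a\<in>UNIV. (\<Sum>d\<in>UNIV. e (a, d) * \<phi> d) * mult (bv a) (bv d') l))"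
    by (simp add: sum_distrib_left sum_distrib_right mult_ac)
  also have "\<dots> = tmult mult (tens one (right_slice \<phi>)) e (k, l)"
    by (simp only: tmult_one_tens_left_apply mult_expand_left[of "right_slice \<phi>"], simp add: right_slice_def)
  finally show "Delta (right_slice \<phi>) (k, l) = tmult mult (tens one (right_slice \<phi>)) e (k, l)" .
qed

lemma star_one [simp]: "star one = one"
  using star_mult[of one "star one"] by simp

lemma tstar_Delta_one [simp]: "tstar star e = e"
  using Delta_star[of one] by simp

lemma star_right_slice: "star (right_slice \<phi>) = right_slice (\<lambda>d'. cnj (\<Sum>c\<in>UNIV. \<phi> c * star (bv d') c))"
proof
  fix j'
  let ?\<psi> = "\<lambda>d'. cnj (\<Sum>c\<in>UNIV. \<phi> c * star (bv d') c)"
  have star_dual: "(\<Sum>d'\<in>UNIV. star (bv b) d' * ?\<psi> d') = cnj (\<phi> b)" for b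
  proof -
    have "(\<Sum>d'\<in>UNIV. star (bv b) d' * ?\<psi> d')
        = cnj (\<Sum>c\<in>UNIV. \<phi> c * (\<Sum>d'\<in>UNIV. cnj (star (bv b) d') * star (bv d') c))"
      by (simp add: sum_distrib_left sum_distrib_right, subst sum.swap, simp add: mult_ac)
    also have "\<dots> = cnj (\<Sum>c\<in>UNIV. \<phi> c * star (star (bv b)) c)"
      by (simp only: star_expand[of "star (bv b)"])
    also have "\<dots> = cnj (\<phi> b)"
      by simp
    finally show ?thesis .
  qed
  have "right_slice ?\<psi> j' = (\<Sum>d'\<in>UNIV. tstar star e (j', d') * ?\<psi> d')"
    by (simp add: right_slice_def)
  also have "\<dots> = (\<Sum>d'\<in>UNIV. \<Sum>a\<in>UNIV. \<Sum>b\<in>UNIV. cnj (e (a, b)) * star (bv a) j' * star (bv b) d' * ?\<psi> d')"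
    by (simp only: tstar_def split sum_distrib_right)
  also have "\<dots> = (\<Sum>a\<in>UNIV. \<Sum>b\<in>UNIV. \<Sum>d'\<in>UNIV. cnj (e (a, b)) * star (bv a) j' * star (bv b) d' * ?\<psi> d')"
    by (rule sum_rotate3)
  also have "\<dots> = (\<Sum>a\<in>UNIV. \<Sum>b\<in>UNIV. cnj (e (a, b)) * star (bv a) j' * (\<Sum>d'\<in>UNIV. star (bv b) d' * ?\<psi> d'))"
    by (simp only: sum_distrib_left mult.assoc)
  also have "\<dots> = (\<Sum>a\<in>UNIV. \<Sum>b\<in>UNIV. cnj (e (a, b)) * star (bv a) j' * cnj (\<phi> b))"
    by (simp only: star_dual)
  also have "\<dots> = star (right_slice \<phi>) j'"
    by (simp only: star_expand[of "right_slice \<phi>"], simp add: right_slice_def sum_distrib_left sum_distrib_right mult_ac)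
  finally show "star (right_slice \<phi>) j' = right_slice ?\<psi> j'" by simp
qed

lemma tstar_tmult_one_tens: "tstar star (tmult mult (tens one z) T) = tmult mult (tstar star T) (tens one (star z))"
proof (rule ext, clarify)
  fix j k
  have "tstar star (tmult mult (tens one z) T) (j, k)
     = (\<Sum>p\<in>UNIV. \<Sum>q\<in>UNIV. cnj (\<Sum>d\<in>UNIV. T (p, d) * mult z (bv d) q) * star (bv p) j * star (bv q) k)"
    by (simp only: tstar_def split tmult_one_tens_left_apply)
  also have "\<dots> = (\<Sum>p\<in>UNIV. \<Sum>q\<in>UNIV. \<Sum>d\<in>UNIV. cnj (T (p, d)) * star (bv p) j * (cnj (mult z (bv d) q) * star (bv q) k))"
    by (simp add: sum_distrib_left sum_distrib_right mult_ac)
  also have "\<dots> = (\<Sum>p\<in>UNIV. \<Sum>d\<in>UNIV. \<Sum>q\<in>UNIV. cnj (T (p, d)) * star (bv p) j * (cnj (mult z (bv d) q) * star (bv q) k))"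
    by (rule sum_swap_inner)
  also have "\<dots> = (\<Sum>p\<in>UNIV. \<Sum>d\<in>UNIV. cnj (T (p, d)) * star (bv p) j * star (mult z (bv d)) k)"
    by (simp only: sum_distrib_left[symmetric] star_expand[of "mult z (bv _)"])
  also have "\<dots> = (\<Sum>p\<in>UNIV. \<Sum>d\<in>UNIV. \<Sum>b\<in>UNIV. cnj (T (p, d)) * star (bv p) j * star (bv d) b * mult (bv b) (star z) k)"
    by (simp only: star_mult mult_expand_left[of "star (bv _)"], simp add: sum_distrib_left mult_ac)
  also have "\<dots> = (\<Sum>b\<in>UNIV. \<Sum>p\<in>UNIV. \<Sum>d\<in>UNIV. cnj (T (p, d)) * star (bv p) j * star (bv d) b * mult (bv b) (star z) k)"
    by (rule sum_rotate3[symmetric])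
  also have "\<dots> = tmult mult (tstar star T) (tens one (star z)) (j, k)"
    by (simp add: tmult_one_tens_right_apply tstar_def sum_distrib_right)
  finally show "tstar star (tmult mult (tens one z) T) (j, k) = tmult mult (tstar star T) (tens one (star z)) (j, k)" .
qed

text \<open>Slices of \<open>\<Delta>(1)\<close> are closed under the involution, so the identity
  \<open>\<Delta>(z) = e(1 \<otimes> z)\<close> follows from \<open>\<Delta>(z) = (1 \<otimes> z)e\<close> by applying \<open>*\<close>.\<close>
lemma Delta_right_slice_right: "Delta (right_slice \<phi>) = tmult mult e (tens one (right_slice \<phi>))"
proof -
  let ?\<psi> = "\<lambda>d'. cnj (\<Sum>c\<in>UNIV. \<phi> c * star (bv d') c)"
  have z: "right_slice \<phi> = star (right_slice ?\<psi>)"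
    using star_right_slice[of \<phi>] by (metis star_star)
  have "Delta (right_slice \<phi>) = tstar star (Delta (right_slice ?\<psi>))"
    by (subst z) (rule Delta_star)
  also have "\<dots> = tmult mult e (tens one (star (right_slice ?\<psi>)))"
    by (simp only: Delta_right_slice_left tstar_tmult_one_tens tstar_Delta_one)
  finally show ?thesis
    by (simp only: z[symmetric])
qed

lemma right_slice_source_Cartan: "right_slice \<phi> \<in> source_Cartan"
  unfolding source_Cartan_def using Delta_right_slice_left Delta_right_slice_right by simp

lemma map_both_S_tmult_one_tens_left:
  "map_both S S (tmult mult (tens one z) T) = tmult mult (map_both S S T) (tens one (S z))"
proof (rule ext, clarify)
  fix j k
  have "map_both S S (tmult mult (tens one z) T) (j, k)
     = (\<Sum>p\<in>UNIV. \<Sum>q\<in>UNIV. \<Sum>d\<in>UNIV. T (p, d) * S (bv p) j * (mult z (bv d) q * S (bv q) k))"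
    by (simp only: map_both_def split tmult_one_tens_left_apply, simp add: sum_distrib_left sum_distrib_right mult_ac)
  also have "\<dots> = (\<Sum>p\<in>UNIV. \<Sum>d\<in>UNIV. \<Sum>q\<in>UNIV. T (p, d) * S (bv p) j * (mult z (bv d) q * S (bv q) k))"
    by (rule sum_swap_inner)
  also have "\<dots> = (\<Sum>p\<in>UNIV. \<Sum>d\<in>UNIV. T (p, d) * S (bv p) j * S (mult z (bv d)) k)"
    by (simp only: sum_distrib_left[symmetric] S_expand[of "mult z (bv _)"])
  also have "\<dots> = (\<Sum>p\<in>UNIV. \<Sum>d\<in>UNIV. \<Sum>b\<in>UNIV. T (p, d) * S (bv p) j * S (bv d) b * mult (bv b) (S z) k)"
    by (simp only: S_mult mult_expand_left[of "S (bv _)"], simp add: sum_distrib_left mult_ac)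
  also have "\<dots> = (\<Sum>b\<in>UNIV. \<Sum>p\<in>UNIV. \<Sum>d\<in>UNIV. T (p, d) * S (bv p) j * S (bv d) b * mult (bv b) (S z) k)"
    by (rule sum_rotate3[symmetric])
  also have "\<dots> = tmult mult (map_both S S T) (tens one (S z)) (j, k)"
    by (simp add: tmult_one_tens_right_apply map_both_def sum_distrib_right)
  finally show "map_both S S (tmult mult (tens one z) T) (j, k)
      = tmult mult (map_both S S T) (tens one (S z)) (j, k)" .
qed

lemma map_both_S_tmult_one_tens_right:
  "map_both S S (tmult mult T (tens one z)) = tmult mult (tens one (S z)) (map_both S S T)"
proof (rule ext, clarify)
  fix j k
  have "map_both S S (tmult mult T (tens one z)) (j, k)
     = (\<Sum>p\<in>UNIV. \<Sum>q\<in>UNIV. \<Sum>b\<in>UNIV. T (p, b) * S (bv p) j * (mult (bv b) z q * S (bv q) k))"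
    by (simp only: map_both_def split tmult_one_tens_right_apply, simp add: sum_distrib_left sum_distrib_right mult_ac)
  also have "\<dots> = (\<Sum>p\<in>UNIV. \<Sum>b\<in>UNIV. \<Sum>q\<in>UNIV. T (p, b) * S (bv p) j * (mult (bv b) z q * S (bv q) k))"
    by (rule sum_swap_inner)
  also have "\<dots> = (\<Sum>p\<in>UNIV. \<Sum>b\<in>UNIV. T (p, b) * S (bv p) j * S (mult (bv b) z) k)"
    by (simp only: sum_distrib_left[symmetric] S_expand[of "mult (bv _) z"])
  also have "\<dots> = (\<Sum>p\<in>UNIV. \<Sum>b\<in>UNIV. \<Sum>d\<in>UNIV. T (p, b) * S (bv p) j * S (bv b) d * mult (S z) (bv d) k)"
    by (simp only: S_mult mult_expand_right[of "S z" "S (bv _)"], simp add: sum_distrib_left mult_ac)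
  also have "\<dots> = (\<Sum>d\<in>UNIV. \<Sum>p\<in>UNIV. \<Sum>b\<in>UNIV. T (p, b) * S (bv p) j * S (bv b) d * mult (S z) (bv d) k)"
    by (rule sum_rotate3[symmetric])
  also have "\<dots> = tmult mult (tens one (S z)) (map_both S S T) (j, k)"
    by (simp add: tmult_one_tens_left_apply map_both_def sum_distrib_right)
  finally show "map_both S S (tmult mult T (tens one z)) (j, k)
      = tmult mult (tens one (S z)) (map_both S S T) (j, k)" .
qed

lemma S_source_Cartan:
  assumes "z \<in> source_Cartan"
  shows "S z \<in> target_Cartan mult one Delta"
proof -
  have Delta_S: "Delta (S z) = flip (map_both S S (Delta z))"
    using S_Delta[of z] by simp
  have S_e: "map_both S S e = flip e"
    using S_Delta[of one] by simp
  have left: "Delta z = tmult mult (tens one z) e" and right: "Delta z = tmult mult e (tens one z)"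
    using assms unfolding source_Cartan_def by blast+
  have "Delta (S z) = tmult mult e (tens (S z) one)"
    by (simp add: Delta_S left S_e map_both_S_tmult_one_tens_left flip_tmult_flip_right)
  moreover have "Delta (S z) = tmult mult (tens (S z) one) e"
    by (simp add: Delta_S right S_e map_both_S_tmult_one_tens_right flip_tmult_flip_left)
  ultimately show ?thesis
    by (simp add: target_Cartan_def)
qed

lemma eps_s_unfold_apply:
  "eps\<^sub>s x j = (\<Sum>p\<in>UNIV. \<Sum>b\<in>UNIV. Delta x (p, b) * mult (S (bv p)) (bv b) j)"
proof -
  have "eps\<^sub>s x j = (\<Sum>a\<in>UNIV. \<Sum>b\<in>UNIV. \<Sum>p\<in>UNIV. Delta x (p, b) * S (bv p) a * mult (bv a) (bv b) j)"
    by (simp add: eps_s_def tmu_def map_both_id_apply sum_distrib_right)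
  also have "\<dots> = (\<Sum>p\<in>UNIV. \<Sum>b\<in>UNIV. \<Sum>a\<in>UNIV. Delta x (p, b) * S (bv p) a * mult (bv a) (bv b) j)"
    by (rule sum_reverse3)
  also have "\<dots> = (\<Sum>p\<in>UNIV. \<Sum>b\<in>UNIV. Delta x (p, b) * mult (S (bv p)) (bv b) j)"
    by (simp only: mult_expand_left[of "S (bv _)"] sum_distrib_left mult.assoc)
  finally show ?thesis .
qed

text \<open>For \<open>\<Delta>(y) = e(y \<otimes> 1)\<close> the definition gives
  \<open>\<epsilon>\<^sub>s(y) = \<mu>(S \<otimes> id)(e(y \<otimes> 1)) = S(y) \<epsilon>\<^sub>s(1)\<close>, and \<open>\<epsilon>\<^sub>s(1) = 1\<close>.\<close>
lemma eps_s_eq_S: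
  assumes "Delta y = tmult mult e (tens y one)"
  shows "eps\<^sub>s y = S y"
proof
  fix j
  have "eps\<^sub>s y j
      = (\<Sum>p\<in>UNIV. \<Sum>b\<in>UNIV. (\<Sum>c\<in>UNIV. e (c, b) * mult (bv c) y p) * mult (S (bv p)) (bv b) j)"
    by (simp only: eps_s_unfold_apply assms tmult_tens_one_right_apply)
  also have "\<dots> = (\<Sum>p\<in>UNIV. \<Sum>b\<in>UNIV. \<Sum>c\<in>UNIV. e (c, b) * (mult (bv c) y p * mult (S (bv p)) (bv b) j))"
    by (simp add: sum_distrib_left sum_distrib_right mult_ac)
  also have "\<dots> = (\<Sum>b\<in>UNIV. \<Sum>c\<in>UNIV. \<Sum>p\<in>UNIV. e (c, b) * (mult (bv c) y p * mult (S (bv p)) (bv b) j))"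
    by (rule sum_rotate3)
  also have "\<dots> = (\<Sum>b\<in>UNIV. \<Sum>c\<in>UNIV. e (c, b) * mult (S (mult (bv c) y)) (bv b) j)"
    by (simp only: sum_distrib_left[symmetric] mult_S_left_expand[of "mult (bv _) y"])
  also have "\<dots> = (\<Sum>b\<in>UNIV. \<Sum>c\<in>UNIV. e (c, b) * mult (S y) (mult (S (bv c)) (bv b)) j)"
    by (simp only: S_mult mult_assoc)
  also have "\<dots> = (\<Sum>c\<in>UNIV. \<Sum>b\<in>UNIV. \<Sum>i\<in>UNIV. e (c, b) * mult (S (bv c)) (bv b) i * mult (S y) (bv i) j)"
    by (subst sum.swap, simp only: mult_expand_right[of "S y" "mult (S (bv _)) (bv _)"],
        simp add: sum_distrib_left mult_ac)
  also have "\<dots> = (\<Sum>i\<in>UNIV. \<Sum>c\<in>UNIV. \<Sum>b\<in>UNIV. e (c, b) * mult (S (bv c)) (bv b) i * mult (S y) (bv i) j)"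
    by (rule sum_rotate3[symmetric])
  also have "\<dots> = (\<Sum>i\<in>UNIV. eps\<^sub>s one i * mult (S y) (bv i) j)"
    by (simp only: eps_s_unfold_apply sum_distrib_right)
  also have "\<dots> = S y j"
    by (simp only: eps_s_one mult_expand_right[of "S y" one, symmetric] mult_one_right)
  finally show "eps\<^sub>s y j = S y j" .
qed

definition target_proj :: "('i \<Rightarrow> complex) \<Rightarrow> ('i \<Rightarrow> complex)" where
  "target_proj w = S (eps\<^sub>s w)"

lemma target_proj_clinear: "clinear target_proj"
  unfolding target_proj_def by (rule clinear_comp[OF eps_s_clinear S_clinear])

lemma target_proj_in_target_Cartan: "target_proj w \<in> target_Cartan mult one Delta"
proof -
  have "eps\<^sub>s w = right_slice (\<lambda>d. eps (mult w (bv d)))"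
    by (rule ext) (simp add: eps_s_apply right_slice_def)
  then show ?thesis
    unfolding target_proj_def using S_source_Cartan right_slice_source_Cartan by simp
qed

lemma target_proj_id: "y \<in> target_Cartan mult one Delta \<Longrightarrow> target_proj y = y"
  unfolding target_Cartan_def target_proj_def using eps_s_eq_S by simp

lemma trace_mult_target_proj: "(\<Sum>r\<in>UNIV. mult x (target_proj (bv r)) r) = eps x"
proof -
  have "(\<Sum>r\<in>UNIV. mult x (target_proj (bv r)) r)
      = (\<Sum>r\<in>UNIV. \<Sum>j\<in>UNIV. \<Sum>d\<in>UNIV. e (j, d) * (mult x (S (bv j)) r * eps (mult (bv r) (bv d))))"
    unfolding target_proj_def
    by (simp only: mult_S_right_expand[of x "eps\<^sub>s (bv _)"] eps_s_apply,
        simp add: sum_distrib_left sum_distrib_right mult_ac)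
  also have "\<dots> = (\<Sum>j\<in>UNIV. \<Sum>d\<in>UNIV. \<Sum>r\<in>UNIV. e (j, d) * (mult x (S (bv j)) r * eps (mult (bv r) (bv d))))"
    by (rule sum_rotate3)
  also have "\<dots> = (\<Sum>j\<in>UNIV. \<Sum>d\<in>UNIV. e (j, d) * eps (mult (mult x (S (bv j))) (bv d)))"
    by (simp only: sum_distrib_left[symmetric] eps_mult_left_expand[of "mult x (S (bv _))"])
  also have "\<dots> = (\<Sum>j\<in>UNIV. \<Sum>d\<in>UNIV. \<Sum>i\<in>UNIV. e (j, d) * mult (S (bv j)) (bv d) i * eps (mult x (bv i)))"
    by (simp only: mult_assoc eps_mult_right_expand[of x "mult (S (bv _)) (bv _)"],
        simp add: sum_distrib_left mult_ac)
  also have "\<dots> = (\<Sum>i\<in>UNIV. \<Sum>j\<in>UNIV. \<Sum>d\<in>UNIV. e (j, d) * mult (S (bv j)) (bv d) i * eps (mult x (bv i)))"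
    by (rule sum_rotate3[symmetric])
  also have "\<dots> = (\<Sum>i\<in>UNIV. eps\<^sub>s one i * eps (mult x (bv i)))"
    by (simp only: eps_s_unfold_apply sum_distrib_right)
  also have "\<dots> = eps x"
    by (simp only: eps_s_one eps_mult_right_expand[of x one, symmetric] mult_one_right)
  finally show ?thesis .
qed

lemma tmult_Delta_one_idem: "tmult mult e e = e"
  using Delta_mult[of one one] by simp

lemma target_Cartan_mult_closed:
  assumes "x \<in> target_Cartan mult one Delta" "y \<in> target_Cartan mult one Delta"
  shows "mult x y \<in> target_Cartan mult one Delta"
proof -
  let ?X = "tens x one" and ?Y = "tens y one"
  have x: "Delta x = tmult mult e ?X" "Delta x = tmult mult ?X e"
    and y: "Delta y = tmult mult e ?Y" "Delta y = tmult mult ?Y e"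
    using assms unfolding target_Cartan_def by auto
  have XY: "tmult mult ?X ?Y = tens (mult x y) one"
    by (simp add: tmult_tens)
  have "Delta (mult x y) = tmult mult (tmult mult e ?X) (tmult mult e ?Y)"
    by (simp add: Delta_mult x(1) y(1))
  also have "\<dots> = tmult mult e (tmult mult (tmult mult ?X e) ?Y)"
    by (simp only: tmult_assoc)
  also have "\<dots> = tmult mult (tmult mult e e) (tmult mult ?X ?Y)"
    by (simp only: x(2)[symmetric] x(1) tmult_assoc)
  finally have left: "Delta (mult x y) = tmult mult e (tens (mult x y) one)"
    by (simp only: tmult_Delta_one_idem XY)
  have "Delta (mult x y) = tmult mult (tmult mult ?X e) (tmult mult ?Y e)"
    by (simp add: Delta_mult x(2) y(2))
  also have "\<dots> = tmult mult ?X (tmult mult (tmult mult e ?Y) e)"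
    by (simp only: tmult_assoc)
  also have "\<dots> = tmult mult (tmult mult ?X ?Y) (tmult mult e e)"
    by (simp only: y(1)[symmetric] y(2) tmult_assoc)
  finally have right: "Delta (mult x y) = tmult mult (tens (mult x y) one) e"
    by (simp only: tmult_Delta_one_idem XY)
  from left right show ?thesis
    by (simp add: target_Cartan_def)
qed

end

theorem proposition2p1p10:
  fixes mult :: "('i::finite \<Rightarrow> complex) \<Rightarrow> ('i \<Rightarrow> complex) \<Rightarrow> ('i \<Rightarrow> complex)"
    and one :: "'i \<Rightarrow> complex"
    and star :: "('i \<Rightarrow> complex) \<Rightarrow> ('i \<Rightarrow> complex)"
    and Delta :: "('i \<Rightarrow> complex) \<Rightarrow> ('i \<times> 'i \<Rightarrow> complex)"
    and S :: "('i \<Rightarrow> complex) \<Rightarrow> ('i \<Rightarrow> complex)"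
    and eps :: "('i \<Rightarrow> complex) \<Rightarrow> complex"
  assumes "weak_Kac_algebra mult one star Delta S eps"
    and "x \<in> target_Cartan mult one Delta"
  shows "eps x = op_trace (target_Cartan mult one Delta) (\<lambda>n. mult x n)"
proof -
  interpret weak_Kac mult one star Delta S eps
    by (rule weak_Kac.intro[OF assms(1)])
  have "op_trace (target_Cartan mult one Delta) (mult x) = (\<Sum>r\<in>UNIV. mult x (target_proj (bv r)) r)"
    by (rule op_trace_via_projection[OF target_proj_clinear target_proj_in_target_Cartan
          target_proj_id mult_clinear_right target_Cartan_mult_closed[OF assms(2)]])
  then show ?thesis
    by (simp add: trace_mult_target_proj)
qed

end
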